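(* Let $A\in\mathbb{R}^{m\times n}$, let $k\geq1$, $\alpha>0$, $\Delta\geq 0$, and $0<L\leq U$ be such that \[ L\|v\|_2\leq\|Av\|_1\leq U\|v\|_2 \] for all $(1+\alpha^2)k$-sparse vectors $v\in\mathbb{R}^n$. Let $S\subset[n]$ be fixed with $|S|=k$. Then for all \[ v\in V_S=\{v\in\mathbb{R}^n : \Delta+\|v_S\|_1\geq\|v_{\overline{S}}\|_1\} \] we have \[ \frac{L}{1+\alpha}\left(\alpha-\frac{U}{L}\right)\|v\|_2-\frac{2U\Delta}{\alpha\sqrt{k}} \leq \|Av\|_1 \leq U\left(1+\frac{1}{\alpha}\right)\|v\|_2+\frac{U\Delta}{\alpha\sqrt{k}}. \]
   Context: For $v\in\mathbb{R}^n$ and $T\subset[n]$, $v_T$ denotes $v$ with all entries whose indices lie outside $T$ set to $0$, and $\overline{S}=[n]\setminus S$. A vector is $s$-sparse if it has at most $s$ nonzero entries. *)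

theory Defs
  imports "HOL-Analysis.Analysis"
begin

text \<open>Vectors in R^n are modelled as real^'n; the l2 norm is the library norm.\<close>

definition l1norm :: "real ^ 'n \<Rightarrow> real" where
  "l1norm v = (\<Sum>i\<in>UNIV. \<bar>v $ i\<bar>)"

definition restr :: "real ^ 'n \<Rightarrow> 'n set \<Rightarrow> real ^ 'n" where
  "restr v T = (\<chi> i. if i \<in> T then v $ i else 0)"

definition sparse :: "real \<Rightarrow> real ^ 'n \<Rightarrow> bool" where
  "sparse s v \<longleftrightarrow> real (card {i. v $ i \<noteq> 0}) \<le> s"

end

theory Submission
  imports Defs
begin

text \<open>
  Let t = floor(alpha^2 k) and let T consist of the t largest entries of v off S. Write
  v = x + r with x = v restricted to S \<union> T, which is (k + t)-sparse, so the two-sided bound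
  applies to x. The tail r is handled for any subadditive N that is bounded by U times the
  l2 norm on (t + 1)-sparse vectors: peeling r into blocks of t + 1 largest entries and
  using AM-GM on each block gives N r \<le> U ||v off S||_1 / sqrt (t + 1), since every entry of
  r is at most the mean of the t entries of T. As sqrt (t + 1) \<ge> alpha sqrt k, the cone
  condition and Cauchy-Schwarz on S turn this into N r \<le> U (||x|| / alpha + Delta / (alpha sqrt k)).
  Taking N = ||A _||_1 and N = ||_|| and applying the triangle inequality to x + r gives both bounds.
\<close>

lemma restr_nth [simp]: "restr v T $ i = (if i \<in> T then v $ i else 0)"
  by (simp add: restr_def)

lemma restr_UNIV [simp]: "restr v UNIV = v"
  by (simp add: vec_eq_iff)

lemma restr_empty [simp]: "restr v {} = 0"
  by (simp add: vec_eq_iff)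

lemma restr_restr [simp]: "restr (restr v S) T = restr v (S \<inter> T)"
  by (simp add: vec_eq_iff)

lemma restr_add_restr_Compl: "restr v T + restr v (- T) = v"
  by (simp add: vec_eq_iff)

lemma sparse_restr:
  assumes "real (card T) \<le> s"
  shows "sparse s (restr v T)"
proof -
  have "card {i. restr v T $ i \<noteq> 0} \<le> card T"
    by (rule card_mono) auto
  then show ?thesis
    using assms unfolding sparse_def by linarith
qed

lemma sparse_mono: "sparse s v \<Longrightarrow> s \<le> s' \<Longrightarrow> sparse s' v"
  by (simp add: sparse_def)

lemma l1norm_nonneg: "0 \<le> l1norm v"
  by (simp add: l1norm_def sum_nonneg)

lemma l1norm_triangle: "l1norm (a + b) \<le> l1norm a + l1norm b"
  unfolding l1norm_def sum.distrib[symmetric] by (rule sum_mono) (simp add: abs_triangle_ineq)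

lemma l1norm_uminus [simp]: "l1norm (- v) = l1norm v"
  by (simp add: l1norm_def)

lemma l1norm_restr: "l1norm (restr v T) = (\<Sum>i\<in>T. \<bar>v $ i\<bar>)"
  by (simp add: l1norm_def if_distrib sum.If_cases)

lemma l1norm_split: "l1norm v = l1norm (restr v T) + l1norm (restr v (- T))"
proof -
  have "l1norm v = (\<Sum>i\<in>T. \<bar>v $ i\<bar>) + (\<Sum>i\<in>- T. \<bar>v $ i\<bar>)"
    unfolding l1norm_def using sum.Int_Diff[of UNIV _ T] by (simp add: Compl_eq_Diff_UNIV)
  then show ?thesis
    by (simp only: l1norm_restr)
qed

lemma norm_restr: "norm (restr v T) = L2_set (\<lambda>i. v $ i) T"
proof -
  have "(norm (restr v T $ i))\<^sup>2 = (if i \<in> T then (v $ i)\<^sup>2 else 0)" for i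
    by simp
  then show ?thesis
    unfolding norm_vec_def L2_set_def by (simp add: sum.inter_restrict[symmetric])
qed

lemma norm_restr_mono: "S \<subseteq> T \<Longrightarrow> norm (restr v S) \<le> norm (restr v T)"
  by (rule norm_le_componentwise_cart) auto

lemma norm_restr_le: "norm (restr v T) \<le> norm v"
  using norm_restr_mono[of T UNIV v] by simp

lemma l1norm_restr_le_sqrt_card: "l1norm (restr v T) \<le> sqrt (card T) * norm (restr v T)"
  using L2_set_mult_ineq[where f="\<lambda>_. 1" and g="\<lambda>i. v $ i" and A=T]
  by (simp add: l1norm_restr norm_restr L2_set_constant)

lemma norm_restr_le_l1norm_and_max:
  fixes r :: "real ^ 'n"
  assumes bounded: "\<And>i. \<bar>r $ i\<bar> \<le> \<theta>" and "b > 0"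
  shows "norm (restr r T) \<le> l1norm (restr r T) / (2 * sqrt b) + \<theta> * sqrt b / 2"
proof -
  have "0 \<le> \<theta>"
    using bounded[of undefined] by (rule order_trans[OF abs_ge_zero])
  have "(norm (restr r T))\<^sup>2 = (\<Sum>i\<in>T. \<bar>r $ i\<bar> * \<bar>r $ i\<bar>)"
    by (simp add: norm_restr L2_set_def sum_nonneg power2_eq_square)
  also have "\<dots> \<le> (\<Sum>i\<in>T. \<bar>r $ i\<bar> * \<theta>)"
    using bounded by (intro sum_mono mult_left_mono) auto
  also have "\<dots> = l1norm (restr r T) * \<theta>"
    by (simp add: l1norm_restr sum_distrib_right)
  also have "\<dots> = (l1norm (restr r T) / sqrt b) * (\<theta> * sqrt b)"
    using \<open>b > 0\<close> by simp
  finally have "norm (restr r T) \<le> sqrt ((l1norm (restr r T) / sqrt b) * (\<theta> * sqrt b))"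
    by (rule real_le_rsqrt)
  also have "\<dots> \<le> (l1norm (restr r T) / sqrt b + \<theta> * sqrt b) / 2"
    using \<open>0 \<le> \<theta>\<close> \<open>b > 0\<close> by (intro arith_geo_mean_sqrt) (simp_all add: l1norm_nonneg)
  finally show ?thesis
    by (simp add: add_divide_distrib)
qed

lemma abs_le_mean_of_larger:
  assumes "card B > 0" and larger: "\<And>i. i \<in> B \<Longrightarrow> \<bar>r $ j\<bar> \<le> \<bar>r $ i\<bar>"
  shows "\<bar>r $ j\<bar> \<le> l1norm (restr r B) / card B"
proof -
  have "card B * \<bar>r $ j\<bar> = (\<Sum>i\<in>B. \<bar>r $ j\<bar>)"
    by simp
  also have "\<dots> \<le> l1norm (restr r B)"
    unfolding l1norm_restr using larger by (rule sum_mono)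
  finally show ?thesis
    using \<open>card B > 0\<close> by (simp add: field_simps)
qed

lemma exists_subset_of_largest:
  fixes f :: "'a \<Rightarrow> 'b::linorder"
  assumes "finite I"
  shows "\<exists>B\<subseteq>I. card B = min b (card I) \<and> (\<forall>i\<in>B. \<forall>j\<in>I - B. f j \<le> f i)"
proof (induction b)
  case 0
  show ?case by auto
next
  case (Suc b)
  then obtain B where B: "B \<subseteq> I" "card B = min b (card I)" "\<forall>i\<in>B. \<forall>j\<in>I - B. f j \<le> f i"
    by blast
  show ?case
  proof (cases "B = I")
    case True
    then show ?thesis using B by auto
  next
    case False
    then have "card B = b" "finite (I - B)" "I - B \<noteq> {}"
      using B assms card_subset_eq[of I B] by (auto simp: min_def split: if_splits)
    then have "Max (f ` (I - B)) \<in> f ` (I - B)"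
      by (intro Max_in) auto
    then obtain j where j: "j \<in> I - B" "f j = Max (f ` (I - B))"
      by auto
    have "card (insert j B) = Suc b"
      using B j \<open>card B = b\<close> assms by (simp add: finite_subset)
    moreover have "card (insert j B) \<le> card I"
      using B j assms by (intro card_mono) auto
    ultimately have "card (insert j B) = min (Suc b) (card I)"
      by simp
    moreover have "\<forall>i\<in>insert j B. \<forall>j'\<in>I - insert j B. f j' \<le> f i"
      using B j \<open>finite (I - B)\<close> by auto
    ultimately show ?thesis
      using B j by (intro exI[of _ "insert j B"]) auto
  qed
qed

lemma subadditive_le_l1norm:
  fixes N :: "real ^ 'n \<Rightarrow> real"
  assumes N_add: "\<And>a c. N (a + c) \<le> N a + N c"
    and N_sparse: "\<And>w. sparse 1 w \<Longrightarrow> N w \<le> U * norm w"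
  shows "N v \<le> U * l1norm v"
proof -
  have "N (restr v F) \<le> U * l1norm (restr v F)" if "finite F" for F
    using that
  proof (induction F rule: finite_induct)
    case empty
    show ?case using N_sparse[of 0] by (simp add: sparse_def l1norm_def)
  next
    case (insert x F)
    have "restr v (insert x F) = restr v {x} + restr v F"
      using insert by (auto simp: vec_eq_iff)
    then have "N (restr v (insert x F)) \<le> N (restr v {x}) + N (restr v F)"
      using N_add by simp
    also have "\<dots> \<le> U * \<bar>v $ x\<bar> + U * l1norm (restr v F)"
      using N_sparse[OF sparse_restr, of "{x}" v] insert.IH by (simp add: norm_restr)
    also have "\<dots> = U * l1norm (restr v (insert x F))"
      using insert by (simp add: l1norm_restr distrib_left)
    finally show ?case .
  qed
  from this[of UNIV] show ?thesis by simp
qed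

lemma sparse_decomposition_bound:
  fixes N :: "real ^ 'n \<Rightarrow> real" and b :: nat
  assumes N_add: "\<And>a c. N (a + c) \<le> N a + N c"
    and N_sparse: "\<And>w. sparse (real b) w \<Longrightarrow> N w \<le> U * norm w"
    and U: "U \<ge> 0" and b: "b \<ge> 1"
    and bounded: "\<And>i. \<bar>r $ i\<bar> \<le> \<theta>"
  shows "N r \<le> U * (l1norm r / sqrt b + \<theta> * sqrt b / 2)"
  using bounded
proof (induction "card {i. r $ i \<noteq> 0}" arbitrary: r \<theta> rule: less_induct)
  case less
  define I where "I = {i. r $ i \<noteq> 0}"
  show ?case
  proof (cases "card I \<le> b")
    case True
    have "N r \<le> U * norm r"
      using N_sparse True by (simp add: sparse_def I_def)
    also have "\<dots> \<le> U * (l1norm r / (2 * sqrt b) + \<theta> * sqrt b / 2)"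
      using norm_restr_le_l1norm_and_max[OF less.prems, of b UNIV] b U by (simp add: mult_left_mono)
    also have "\<dots> \<le> U * (l1norm r / sqrt b + \<theta> * sqrt b / 2)"
      using U b by (intro mult_left_mono add_right_mono divide_left_mono) (auto simp: l1norm_nonneg)
    finally show ?thesis .
  next
    case False
    \<comment> \<open>Peel off the b largest entries; the rest is bounded by their mean and has smaller support.\<close>
    obtain B where B: "B \<subseteq> I" "card B = b" "\<forall>i\<in>B. \<forall>j\<in>I - B. \<bar>r $ j\<bar> \<le> \<bar>r $ i\<bar>"
      using exists_subset_of_largest[of I b "\<lambda>i. \<bar>r $ i\<bar>"] False by (auto simp: I_def)
    define m where "m = l1norm (restr r B)"
    define r' where "r' = restr r (- B)"
    have "{i. r' $ i \<noteq> 0} = I - B"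
      by (auto simp: r'_def I_def)
    then have "card {i. r' $ i \<noteq> 0} < card {i. r $ i \<noteq> 0}"
      using B False b by (simp add: card_Diff_subset finite_subset I_def[symmetric])
    moreover have "\<bar>r' $ j\<bar> \<le> m / b" for j
      using abs_le_mean_of_larger[of B r j] B b
      by (cases "j \<in> I") (auto simp: r'_def I_def m_def l1norm_nonneg)
    ultimately have "N r' \<le> U * (l1norm r' / sqrt b + m / b * sqrt b / 2)"
      by (rule less.hyps)
    also have "m / b * sqrt b / 2 = m / (2 * sqrt b)"
      using b by (simp add: field_simps real_sqrt_mult[symmetric])
    finally have "N r' \<le> U * (l1norm r' / sqrt b + m / (2 * sqrt b))" .
    moreover have "N (restr r B) \<le> U * (m / (2 * sqrt b) + \<theta> * sqrt b / 2)"
      using N_sparse[OF sparse_restr, of B r] norm_restr_le_l1norm_and_max[OF less.prems, of b B] B b U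
      by (auto simp: m_def intro: order_trans mult_left_mono)
    moreover have "N r \<le> N (restr r B) + N r'"
      using N_add[of "restr r B" r'] by (simp add: r'_def restr_add_restr_Compl)
    ultimately have "N r \<le> U * ((m + l1norm r') / sqrt b + \<theta> * sqrt b / 2)"
      by (simp add: algebra_simps add_divide_distrib)
    also have "m + l1norm r' = l1norm r"
      using l1norm_split[of r B] by (simp add: m_def r'_def)
    finally show ?thesis .
  qed
qed

lemma tail_bound_beyond_largest:
  fixes N :: "real ^ 'n \<Rightarrow> real" and t :: nat
  assumes N_add: "\<And>a c. N (a + c) \<le> N a + N c"
    and N_sparse: "\<And>w. sparse (real (t + 1)) w \<Longrightarrow> N w \<le> U * norm w"
    and U: "U \<ge> 0"
    and card_T: "card T = min t CARD('n)"
    and largest: "\<forall>i\<in>T. \<forall>j\<in>- T. \<bar>r $ j\<bar> \<le> \<bar>r $ i\<bar>"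
  shows "N (restr r (- T)) \<le> U * l1norm r / sqrt (t + 1)"
proof (cases "t = 0")
  case True
  then have "T = {}"
    using card_T by simp
  moreover have "N r \<le> U * l1norm r"
    using N_add N_sparse True by (intro subadditive_le_l1norm) simp_all
  ultimately show ?thesis
    using True by simp
next
  case False
  define m where "m = l1norm (restr r T)"
  define s where "s = sqrt (real (t + 1))"
  have "s > 0" "s * s = t + 1"
    by (simp_all add: s_def)
  have "\<bar>restr r (- T) $ j\<bar> \<le> m / t" for j
  proof (cases "j \<in> T")
    case False
    then have "card T = t"
      using card_T card_eq_UNIV_imp_eq_UNIV[of T] by (auto simp: min_def split: if_splits)
    then show ?thesis
      using abs_le_mean_of_larger[of T r j] largest False \<open>t \<noteq> 0\<close> by (simp add: m_def)
  qed (simp add: m_def l1norm_nonneg)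
  then have "N (restr r (- T)) \<le> U * (l1norm (restr r (- T)) / s + m / t * s / 2)"
    unfolding s_def by (intro sparse_decomposition_bound[where b="t + 1", OF N_add N_sparse U]) simp_all
  also have "m / t * s / 2 \<le> m / s"
  proof -
    have "m * (s * s) \<le> m * (2 * t)"
      using False \<open>s * s = t + 1\<close> by (intro mult_left_mono) (auto simp: m_def l1norm_nonneg)
    then show ?thesis
      using False \<open>s > 0\<close> by (simp add: field_simps)
  qed
  then have "U * (l1norm (restr r (- T)) / s + m / t * s / 2) \<le> U * (l1norm (restr r (- T)) / s + m / s)"
    using U by (simp add: mult_left_mono)
  also have "\<dots> = U * l1norm r / s"
    using l1norm_split[of r T] by (simp add: m_def add_divide_distrib[symmetric] add.commute)
  finally show ?thesis
    by (simp add: s_def)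
qed

lemma cone_tail_bound:
  fixes N :: "real ^ 'n \<Rightarrow> real" and t :: nat and U \<alpha> \<Delta> :: real
  assumes N_add: "\<And>a c. N (a + c) \<le> N a + N c"
    and N_sparse: "\<And>w. sparse (real (t + 1)) w \<Longrightarrow> N w \<le> U * norm w"
    and U: "U \<ge> 0" and "\<alpha> > 0" and "S \<noteq> {}" and t: "\<alpha>\<^sup>2 * card S \<le> real t + 1"
    and cone: "\<Delta> + l1norm (restr v S) \<ge> l1norm (restr v (- S))"
    and card_T: "card T = min t CARD('n)"
    and largest: "\<forall>i\<in>T. \<forall>j\<in>- T. \<bar>restr v (- S) $ j\<bar> \<le> \<bar>restr v (- S) $ i\<bar>"
  shows "N (restr v (- (S \<union> T)))
    \<le> U * (norm (restr v (S \<union> T)) / \<alpha> + \<Delta> / (\<alpha> * sqrt (card S)))"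
proof -
  define k where "k = card S"
  have "k > 0"
    using \<open>S \<noteq> {}\<close> by (simp add: k_def card_gt_0_iff)
  have "\<alpha> * sqrt k = sqrt (\<alpha>\<^sup>2 * k)"
    using \<open>\<alpha> > 0\<close> by (simp add: real_sqrt_mult)
  also have "\<dots> \<le> sqrt (t + 1)"
    using t by (simp add: k_def)
  finally have scale: "\<alpha> * sqrt k \<le> sqrt (t + 1)" .
  have "N (restr v (- (S \<union> T))) = N (restr (restr v (- S)) (- T))"
    by simp
  also have "\<dots> \<le> U * l1norm (restr v (- S)) / sqrt (t + 1)"
    by (rule tail_bound_beyond_largest[OF N_add N_sparse U card_T largest])
  also have "\<dots> \<le> U * (\<Delta> + l1norm (restr v S)) / (\<alpha> * sqrt k)"
    using scale cone order_trans[OF l1norm_nonneg cone] U \<open>\<alpha> > 0\<close> \<open>k > 0\<close>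
    by (intro frac_le mult_left_mono) (auto simp: l1norm_nonneg)
  also have "\<dots> \<le> U * (\<Delta> + sqrt k * norm (restr v (S \<union> T))) / (\<alpha> * sqrt k)"
    using l1norm_restr_le_sqrt_card[of v S] norm_restr_mono[of S "S \<union> T" v] U \<open>\<alpha> > 0\<close> \<open>k > 0\<close>
    by (intro divide_right_mono mult_left_mono add_left_mono)
      (auto simp: k_def intro: order_trans mult_left_mono)
  also have "\<dots> = U * (norm (restr v (S \<union> T)) / \<alpha> + \<Delta> / (\<alpha> * sqrt k))"
    using \<open>\<alpha> > 0\<close> \<open>k > 0\<close> by (simp add: field_simps)
  finally show ?thesis
    by (simp add: k_def)
qed

lemma upper_bound_from_small_tail:
  fixes N :: "'a::real_normed_vector \<Rightarrow> real"
  assumes N_add: "\<And>a c. N (a + c) \<le> N a + N c"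
    and "\<alpha> > 0" "U \<ge> 0"
    and x: "N x \<le> U * norm x" "norm x \<le> norm (x + r)"
    and r: "N r \<le> U * (norm x / \<alpha> + E)"
  shows "N (x + r) \<le> U * (1 + 1 / \<alpha>) * norm (x + r) + U * E"
proof -
  have "N (x + r) \<le> U * norm x + U * (norm x / \<alpha> + E)"
    using N_add[of x r] x r by linarith
  also have "\<dots> = U * (1 + 1 / \<alpha>) * norm x + U * E"
    by (simp add: algebra_simps)
  also have "\<dots> \<le> U * (1 + 1 / \<alpha>) * norm (x + r) + U * E"
    using x \<open>\<alpha> > 0\<close> \<open>U \<ge> 0\<close> by (intro add_right_mono mult_left_mono) auto
  finally show ?thesis .
qed

lemma lower_bound_from_small_tail:
  fixes N :: "'a::real_normed_vector \<Rightarrow> real"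
  assumes N_add: "\<And>a c. N (a + c) \<le> N a + N c" and N_minus: "\<And>a. N (- a) = N a"
    and "\<alpha> > 0" "L > 0" "L \<le> U" "E \<ge> 0"
    and x: "L * norm x \<le> N x"
    and r: "N r \<le> U * (norm x / \<alpha> + E)" "norm r \<le> norm x / \<alpha> + E"
  shows "L / (1 + \<alpha>) * (\<alpha> - U / L) * norm (x + r) - 2 * U * E \<le> N (x + r)"
proof -
  define c where "c = L / (1 + \<alpha>) * (\<alpha> - U / L)"
  have "c * (1 + \<alpha>) = L * (\<alpha> - U / L)"
    using \<open>\<alpha> > 0\<close> by (simp add: c_def)
  also have "\<dots> = \<alpha> * L - U"
    using \<open>L > 0\<close> by (simp add: right_diff_distrib)
  finally have c: "c * (1 + \<alpha>) = \<alpha> * L - U" .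
  \<comment> \<open>N 0 \<le> 2 N 0 forces N 0 \<ge> 0, and N 0 \<le> N a + N (- a) = 2 N a.\<close>
  have "0 \<le> N (x + r)"
    using N_add[of "x + r" "- (x + r)"] N_add[of 0 0] N_minus[of "x + r"] by simp
  show ?thesis
  proof (cases "c \<ge> 0")
    case False
    then show ?thesis
      using \<open>0 \<le> N (x + r)\<close> \<open>E \<ge> 0\<close> \<open>L > 0\<close> \<open>L \<le> U\<close> unfolding c_def[symmetric]
      by (smt (verit) mult_nonneg_nonneg mult_nonpos_nonneg norm_ge_zero)
  next
    case True
    have c_scale: "c * (1 + 1 / \<alpha>) = L - U / \<alpha>"
      using c \<open>\<alpha> > 0\<close> by (simp add: field_simps)
    have "\<alpha> * L \<le> \<alpha> * U"
      using \<open>\<alpha> > 0\<close> \<open>L \<le> U\<close> by simp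
    then have "c * (1 + \<alpha>) \<le> U * (1 + \<alpha>)"
      unfolding c using \<open>L \<le> U\<close> \<open>L > 0\<close> by (simp add: algebra_simps)
    then have "c * E \<le> U * E"
      using \<open>\<alpha> > 0\<close> \<open>E \<ge> 0\<close> by (simp add: mult_right_mono)
    have "norm (x + r) \<le> (1 + 1 / \<alpha>) * norm x + E"
      using norm_triangle_ineq[of x r] r(2) by (simp add: distrib_right)
    then have "c * norm (x + r) \<le> c * ((1 + 1 / \<alpha>) * norm x + E)"
      using True by (rule mult_left_mono)
    also have "\<dots> = (c * (1 + 1 / \<alpha>)) * norm x + c * E"
      by (simp add: algebra_simps)
    also have "\<dots> = L * norm x - U / \<alpha> * norm x + c * E"
      by (simp add: c_scale left_diff_distrib)
    also have "\<dots> \<le> N x - N r + 2 * U * E"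
      using x r(1) \<open>c * E \<le> U * E\<close> by (simp add: distrib_left)
    also have "N x - N r \<le> N (x + r)"
      using N_add[of "x + r" "- r"] N_minus[of r] by simp
    finally show ?thesis
      unfolding c_def[symmetric] by simp
  qed
qed

lemma cone_bounds:
  fixes N :: "real ^ 'n \<Rightarrow> real" and t :: nat and \<alpha> \<Delta> L U :: real
  assumes N_add: "\<And>a c. N (a + c) \<le> N a + N c" and N_minus: "\<And>a. N (- a) = N a"
    and "\<alpha> > 0" "0 < L" "L \<le> U" "\<Delta> \<ge> 0" "S \<noteq> {}" and t: "\<alpha>\<^sup>2 * card S \<le> real t + 1"
    and N_sparse: "\<And>w. sparse (real (card S + t)) w \<Longrightarrow> L * norm w \<le> N w \<and> N w \<le> U * norm w"
    and cone: "\<Delta> + l1norm (restr v S) \<ge> l1norm (restr v (- S))"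
  shows "L / (1 + \<alpha>) * (\<alpha> - U / L) * norm v - 2 * U * (\<Delta> / (\<alpha> * sqrt (card S))) \<le> N v
    \<and> N v \<le> U * (1 + 1 / \<alpha>) * norm v + U * (\<Delta> / (\<alpha> * sqrt (card S)))"
proof -
  obtain T where card_T: "card T = min t CARD('n)"
    and largest: "\<forall>i\<in>T. \<forall>j\<in>- T. \<bar>restr v (- S) $ j\<bar> \<le> \<bar>restr v (- S) $ i\<bar>"
    using exists_subset_of_largest[of UNIV t "\<lambda>i. \<bar>restr v (- S) $ i\<bar>"] by (auto simp: Compl_eq_Diff_UNIV)
  define x where "x = restr v (S \<union> T)"
  define r where "r = restr v (- (S \<union> T))"
  define E where "E = \<Delta> / (\<alpha> * sqrt (card S))"
  have v: "x + r = v"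
    unfolding x_def r_def by (rule restr_add_restr_Compl)
  have "U \<ge> 0" "E \<ge> 0" "card S \<ge> 1"
    using \<open>0 < L\<close> \<open>L \<le> U\<close> \<open>\<Delta> \<ge> 0\<close> \<open>\<alpha> > 0\<close> \<open>S \<noteq> {}\<close> by (auto simp: E_def Suc_le_eq card_gt_0_iff)
  then have N_tsparse: "N w \<le> U * norm w" if "sparse (real (t + 1)) w" for w
    using N_sparse[OF sparse_mono[OF that]] by simp
  have x: "L * norm x \<le> N x" "N x \<le> U * norm x"
    using N_sparse[OF sparse_restr] card_Un_le[of S T] card_T by (simp_all add: x_def)
  have x_le: "norm x \<le> norm (x + r)"
    unfolding v unfolding x_def by (rule norm_restr_le)
  have r: "N r \<le> U * (norm x / \<alpha> + E)"
    unfolding x_def r_def E_def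
    by (rule cone_tail_bound[OF N_add N_tsparse \<open>U \<ge> 0\<close> \<open>\<alpha> > 0\<close> \<open>S \<noteq> {}\<close> t cone card_T largest])
  have r_norm: "norm r \<le> norm x / \<alpha> + E"
    using cone_tail_bound[where N=norm and U=1, OF norm_triangle_ineq _ zero_le_one \<open>\<alpha> > 0\<close> \<open>S \<noteq> {}\<close>
        t cone card_T largest]
    by (simp add: x_def r_def E_def)
  have "L / (1 + \<alpha>) * (\<alpha> - U / L) * norm (x + r) - 2 * U * E \<le> N (x + r)"
    by (rule lower_bound_from_small_tail[where N=N, OF N_add N_minus \<open>\<alpha> > 0\<close> \<open>0 < L\<close> \<open>L \<le> U\<close>
          \<open>E \<ge> 0\<close> x(1) r r_norm])
  moreover have "N (x + r) \<le> U * (1 + 1 / \<alpha>) * norm (x + r) + U * E"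
    by (rule upper_bound_from_small_tail[where N=N, OF N_add \<open>\<alpha> > 0\<close> \<open>U \<ge> 0\<close> x(2) x_le r])
  ultimately show ?thesis
    unfolding v E_def ..
qed

theorem lemma3p3:
  fixes A :: "real ^ 'n ^ 'm" and k :: nat and \<alpha> \<Delta> L U :: real and S :: "'n set"
    and v :: "real ^ 'n"
  assumes "k \<ge> 1" and "\<alpha> > 0" and "\<Delta> \<ge> 0" and "0 < L" and "L \<le> U"
    and RIP: "\<And>w :: real ^ 'n. sparse ((1 + \<alpha>\<^sup>2) * real k) w \<Longrightarrow>
               L * norm w \<le> l1norm (A *v w) \<and> l1norm (A *v w) \<le> U * norm w"
    and "card S = k"
    and VS: "\<Delta> + l1norm (restr v S) \<ge> l1norm (restr v (- S))"
  shows "L / (1 + \<alpha>) * (\<alpha> - U / L) * norm v - 2 * U * \<Delta> / (\<alpha> * sqrt (real k))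
           \<le> l1norm (A *v v)
       \<and> l1norm (A *v v) \<le> U * (1 + 1 / \<alpha>) * norm v + U * \<Delta> / (\<alpha> * sqrt (real k))"
proof -
  define t where "t = nat \<lfloor>\<alpha>\<^sup>2 * k\<rfloor>"
  have "real t = \<lfloor>\<alpha>\<^sup>2 * k\<rfloor>"
    by (simp add: t_def)
  then have t: "real t \<le> \<alpha>\<^sup>2 * k" "\<alpha>\<^sup>2 * card S \<le> real t + 1"
    using \<open>card S = k\<close> real_of_int_floor_add_one_ge[of "\<alpha>\<^sup>2 * k"] by simp_all
  have N_sparse: "L * norm w \<le> l1norm (A *v w) \<and> l1norm (A *v w) \<le> U * norm w"
    if "sparse (real (card S + t)) w" for w :: "real ^ 'n"
    using that t \<open>card S = k\<close> by (intro RIP) (elim sparse_mono, simp add: algebra_simps)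
  have N_add: "l1norm (A *v (a + c)) \<le> l1norm (A *v a) + l1norm (A *v c)" for a c
    by (simp add: matrix_vector_right_distrib l1norm_triangle)
  have N_minus: "l1norm (A *v (- a)) = l1norm (A *v a)" for a
    using matrix_vector_mult_diff_distrib[of A 0 a] by simp
  have "S \<noteq> {}"
    using \<open>card S = k\<close> \<open>k \<ge> 1\<close> by auto
  from cone_bounds[OF N_add N_minus \<open>\<alpha> > 0\<close> \<open>0 < L\<close> \<open>L \<le> U\<close> \<open>\<Delta> \<ge> 0\<close> this t(2) N_sparse VS]
  show ?thesis
    by (simp add: \<open>card S = k\<close>)
qed

end
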